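(* Let $C:2^M\to\mathbb{R}_{\ge0}$ be a monotone normalized cost function and $P_C$ its potential function. If $C$ is XOS (in particular, if $C$ is submodular), then $P_C(\vec S)\ge C(\vec S)$ for every allocation $\vec S$. If $C$ is subadditive, then $P_C(\vec S)\ge \frac{C(\vec S)}{2}$ for every allocation $\vec S$.
   Context: Setting. $N=\{1,\dots,n\}$ is a set of players and $M_1,\dots,M_n$ are pairwise disjoint finite sets; $M=\bigcup_i M_i$. An allocation is a vector $\vec S=(S_1,\dots,S_n)$ with $S_i\subseteq M_i$; since the $M_i$ are disjoint, allocations are identified with subsets $\bigcup_i S_i$ of $M$, so a function on allocations is a set function on $2^M$. The potential function of a cost function $C$ is $P_C(\vec S)=\sum_{\emptyset\neq I\subseteq N}\frac{C(\bigcup_{i\in I}S_i)}{|I|\binom{n}{|I|}}$. A set function $f$ on $2^M$ is XOS if there are additive functions $a_1,\dots,a_t$ (i.e. $a_r(S)=\sum_{j\in S}a_r(\{j\})$) with $f(S)=\max_r a_r(S)$ for all $S$; subadditive if $f(S)+f(T)\ge f(S\cup T)$ for all $S,T$. *)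

theory Defs
  imports Complex_Main
begin

text \<open>Players are \<open>{1..n}\<close>; player i owns the item set \<open>Mi i\<close>;
  the ground set is \<open>M = (\<Union>i\<in>{1..n}. Mi i)\<close>.
  Allocations \<open>S\<close> (with \<open>S i \<subseteq> Mi i\<close>) are identified with \<open>\<Union>i\<in>{1..n}. S i\<close>.\<close>

definition ground :: "nat \<Rightarrow> (nat \<Rightarrow> 'a set) \<Rightarrow> 'a set" where
  "ground n Mi = (\<Union>i\<in>{1..n}. Mi i)"

definition is_allocation :: "nat \<Rightarrow> (nat \<Rightarrow> 'a set) \<Rightarrow> (nat \<Rightarrow> 'a set) \<Rightarrow> bool" where
  "is_allocation n Mi S \<longleftrightarrow> (\<forall>i\<in>{1..n}. S i \<subseteq> Mi i)"

definition alloc_set :: "nat \<Rightarrow> (nat \<Rightarrow> 'a set) \<Rightarrow> 'a set" where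
  "alloc_set n S = (\<Union>i\<in>{1..n}. S i)"

definition potential :: "nat \<Rightarrow> ('a set \<Rightarrow> real) \<Rightarrow> (nat \<Rightarrow> 'a set) \<Rightarrow> real" where
  "potential n C S =
     (\<Sum>I\<in>{I. I \<subseteq> {1..n} \<and> I \<noteq> {}}.
        C (\<Union>i\<in>I. S i) / (real (card I) * real (n choose card I)))"

definition monotone_cost :: "'a set \<Rightarrow> ('a set \<Rightarrow> real) \<Rightarrow> bool" where
  "monotone_cost M C \<longleftrightarrow> (\<forall>S T. S \<subseteq> T \<and> T \<subseteq> M \<longrightarrow> C S \<le> C T)"

definition normalized_cost :: "('a set \<Rightarrow> real) \<Rightarrow> bool" where
  "normalized_cost C \<longleftrightarrow> C {} = 0"

definition nonneg_cost :: "'a set \<Rightarrow> ('a set \<Rightarrow> real) \<Rightarrow> bool" where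
  "nonneg_cost M C \<longleftrightarrow> (\<forall>S \<subseteq> M. C S \<ge> 0)"

text \<open>XOS: maximum of finitely many (at least one) additive functions; an additive
  function on \<open>2^M\<close> is given by its values on singletons.\<close>
definition XOS :: "'a set \<Rightarrow> ('a set \<Rightarrow> real) \<Rightarrow> bool" where
  "XOS M C \<longleftrightarrow> (\<exists>A :: ('a \<Rightarrow> real) set. finite A \<and> A \<noteq> {} \<and>
      (\<forall>S \<subseteq> M. C S = Max ((\<lambda>a. \<Sum>j\<in>S. a j) ` A)))"

definition subadditive :: "'a set \<Rightarrow> ('a set \<Rightarrow> real) \<Rightarrow> bool" where
  "subadditive M C \<longleftrightarrow> (\<forall>S T. S \<subseteq> M \<and> T \<subseteq> M \<longrightarrow> C S + C T \<ge> C (S \<union> T))"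

end

theory Submission imports Defs begin

text \<open>Write \<open>w(I) = 1 / (|I| \<cdot> binom n |I|)\<close> for the weights of the potential. For a fixed
  player \<open>i\<close> the weights of all coalitions containing \<open>i\<close> sum to 1, so the potential of an
  additive cost is exactly its total cost. An XOS cost is bounded below by the additive
  function attaining its value at \<open>S\<close>, which gives \<open>P\<^sub>C(S) \<ge> C(S)\<close>.
  For a subadditive cost, \<open>w(I) \<ge> 1/(n \<cdot> binom n |I|)\<close>, and pairing every coalition with its
  complement (which has the same binomial coefficient) yields
  \<open>\<Sum>\<^sub>I C(I)/binom n |I| \<ge> (n+1) C(S)/2\<close>, hence \<open>P\<^sub>C(S) \<ge> C(S)/2\<close>.\<close>

lemma sum_Pow_by_card:
  assumes "finite A"
  shows "(\<Sum>I\<in>Pow A. h (card I)) = (\<Sum>k\<le>card A. real (card A choose k) * h k)"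
proof -
  have "(\<Sum>I\<in>Pow A. h (card I)) = (\<Sum>k\<le>card A. \<Sum>I\<in>{I\<in>Pow A. card I = k}. h (card I))"
    by (rule sum.group[symmetric]) (use assms in \<open>auto intro: card_mono\<close>)
  also have "\<dots> = (\<Sum>k\<le>card A. real (card {I\<in>Pow A. card I = k}) * h k)"
    by (intro sum.cong) auto
  also have "\<dots> = (\<Sum>k\<le>card A. real (card A choose k) * h k)"
    using n_subsets[OF assms] by (simp add: Collect_conj_eq Int_commute Pow_def)
  finally show ?thesis .
qed

definition potential_weight :: "nat \<Rightarrow> nat set \<Rightarrow> real" where
  "potential_weight n I = 1 / (real (card I) * real (n choose card I))"

lemma potential_weight_nonneg: "0 \<le> potential_weight n I"
  by (simp add: potential_weight_def)

text \<open>The empty coalition gets weight \<open>1/0 = 0\<close>, so it may be added to the index set.\<close>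
lemma potential_eq_weighted_sum:
  "potential n C S = (\<Sum>I\<in>Pow {1..n}. C (\<Union>i\<in>I. S i) * potential_weight n I)"
proof -
  have "Pow {1..n} = insert {} {I. I \<subseteq> {1..n} \<and> I \<noteq> {}}" by auto
  then show ?thesis
    by (simp add: potential_def potential_weight_def)
qed

lemma binomial_weight_eq:
  assumes "k \<le> m"
  shows "real (m choose k) / (real (Suc k) * real (Suc m choose Suc k)) = 1 / real (Suc m)"
proof -
  have denominator: "real (Suc k) * real (Suc m choose Suc k) = real (Suc m) * real (m choose k)"
    using Suc_times_binomial_eq[of m k] by (metis mult.commute of_nat_mult)
  have "0 < real (m choose k)" using assms by simp
  then show ?thesis unfolding denominator by (simp del: of_nat_Suc)
qed

lemma sum_potential_weight_containing:
  assumes "finite N" "i \<in> N"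
  shows "(\<Sum>I\<in>{I\<in>Pow N. i \<in> I}. potential_weight (card N) I) = 1"
proof -
  define m where "m = card (N - {i})"
  have card_N: "card N = Suc m" using assms by (metis m_def card_Suc_Diff1)
  have fin: "finite (N - {i})" using assms by simp
  have image: "{I\<in>Pow N. i \<in> I} = insert i ` Pow (N - {i})"
  proof (intro equalityI subsetI)
    fix I assume "I \<in> {I\<in>Pow N. i \<in> I}"
    then have "I = insert i (I - {i})" "I - {i} \<in> Pow (N - {i})" by auto
    then show "I \<in> insert i ` Pow (N - {i})" by blast
  qed (use assms in auto)
  have inj: "inj_on (insert i) (Pow (N - {i}))"
    unfolding inj_on_def by auto
  have card_insert: "card (insert i J) = Suc (card J)" if "J \<in> Pow (N - {i})" for J
    using that fin by (auto intro: card_insert_disjoint finite_subset)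
  have "(\<Sum>I\<in>{I\<in>Pow N. i \<in> I}. potential_weight (card N) I)
      = (\<Sum>J\<in>Pow (N - {i}). 1 / (real (Suc (card J)) * real (Suc m choose Suc (card J))))"
    unfolding image sum.reindex[OF inj] card_N
    by (intro sum.cong) (simp_all add: potential_weight_def card_insert)
  also have "\<dots> = (\<Sum>k\<le>m. real (m choose k) * (1 / (real (Suc k) * real (Suc m choose Suc k))))"
    using sum_Pow_by_card[OF fin, of "\<lambda>k. 1 / (real (Suc k) * real (Suc m choose Suc k))"]
    unfolding m_def .
  also have "\<dots> = (\<Sum>k\<le>m. 1 / real (Suc m))"
  proof (intro sum.cong refl)
    fix k assume "k \<in> {..m}"
    then show "real (m choose k) * (1 / (real (Suc k) * real (Suc m choose Suc k))) = 1 / real (Suc m)"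
      using binomial_weight_eq[of k m] by simp
  qed
  finally show ?thesis by simp
qed

lemma weighted_sum_additive:
  assumes "finite N"
  shows "(\<Sum>I\<in>Pow N. sum x I * potential_weight (card N) I) = sum x N"
proof -
  have "(\<Sum>I\<in>Pow N. sum x I * potential_weight (card N) I)
      = (\<Sum>I\<in>Pow N. \<Sum>i\<in>{i\<in>N. i \<in> I}. x i * potential_weight (card N) I)"
  proof (intro sum.cong refl)
    fix I assume "I \<in> Pow N"
    then have "{i\<in>N. i \<in> I} = I" by auto
    then show "sum x I * potential_weight (card N) I
        = (\<Sum>i\<in>{i\<in>N. i \<in> I}. x i * potential_weight (card N) I)"
      by (simp add: sum_distrib_right)
  qed
  also have "\<dots> = (\<Sum>i\<in>N. \<Sum>I\<in>{I\<in>Pow N. i \<in> I}. x i * potential_weight (card N) I)"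
    using assms by (intro sum.swap_restrict) auto
  also have "\<dots> = sum x N"
  proof (intro sum.cong refl)
    fix i assume "i \<in> N"
    then show "(\<Sum>I\<in>{I\<in>Pow N. i \<in> I}. x i * potential_weight (card N) I) = x i"
      using sum_potential_weight_containing[OF assms] by (simp flip: sum_distrib_left)
  qed
  finally show ?thesis .
qed

lemma weighted_sum_ge_if_additive_minorant:
  assumes "finite N" "\<And>I. I \<subseteq> N \<Longrightarrow> sum x I \<le> f I" "f N = sum x N"
  shows "f N \<le> (\<Sum>I\<in>Pow N. f I * potential_weight (card N) I)"
proof -
  have "f N = (\<Sum>I\<in>Pow N. sum x I * potential_weight (card N) I)"
    using assms(1,3) by (simp add: weighted_sum_additive)
  also have "\<dots> \<le> (\<Sum>I\<in>Pow N. f I * potential_weight (card N) I)"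
    by (intro sum_mono mult_right_mono assms(2) potential_weight_nonneg) auto
  finally show ?thesis .
qed

lemma sum_Pow_complement:
  "(\<Sum>I\<in>Pow N. g (N - I)) = (\<Sum>I\<in>Pow N. g I)"
proof -
  have "bij_betw (\<lambda>I. N - I) (Pow N) (Pow N)"
    by (rule bij_betw_byWitness[where f' = "\<lambda>I. N - I"]) auto
  then show ?thesis by (rule sum.reindex_bij_betw)
qed

lemma sum_Pow_div_binomial_ge:
  assumes "finite N" "\<And>I. I \<subseteq> N \<Longrightarrow> f N \<le> f I + f (N - I)"
  shows "real (Suc (card N)) * f N \<le> 2 * (\<Sum>I\<in>Pow N. f I / real (card N choose card I))"
proof -
  define g where "g I = f I / real (card N choose card I)" for I
  have "real (Suc (card N)) * f N = (\<Sum>k\<le>card N. real (card N choose k) * (f N / real (card N choose k)))"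
    by simp
  also have "\<dots> = (\<Sum>I\<in>Pow N. f N / real (card N choose card I))"
    using sum_Pow_by_card[OF assms(1), of "\<lambda>k. f N / real (card N choose k)"] by simp
  also have "\<dots> \<le> (\<Sum>I\<in>Pow N. g I + g (N - I))"
  proof (intro sum_mono)
    fix I assume "I \<in> Pow N"
    then have "I \<subseteq> N" "finite I" using assms(1) finite_subset by auto
    then have "card N choose card (N - I) = card N choose card I"
      using card_mono[OF assms(1)] by (simp add: card_Diff_subset binomial_symmetric[symmetric])
    moreover have "0 < card N choose card I"
      using \<open>I \<subseteq> N\<close> card_mono[OF assms(1)] by simp
    ultimately show "f N / real (card N choose card I) \<le> g I + g (N - I)"
      using assms(2)[OF \<open>I \<subseteq> N\<close>] by (simp add: g_def divide_right_mono flip: add_divide_distrib)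
  qed
  also have "\<dots> = 2 * (\<Sum>I\<in>Pow N. g I)"
    by (simp add: sum.distrib sum_Pow_complement)
  finally show ?thesis by (simp add: g_def)
qed

lemma potential_weight_ge:
  assumes "finite N" "I \<subseteq> N" "I \<noteq> {}"
  shows "1 / (real (card N) * real (card N choose card I)) \<le> potential_weight (card N) I"
proof -
  have "finite I" using assms(1,2) by (rule finite_subset[rotated])
  then have "0 < card I" using assms(3) by (simp add: card_gt_0_iff)
  moreover have "card I \<le> card N" using assms(1,2) by (rule card_mono)
  ultimately show ?thesis
    unfolding potential_weight_def by (intro divide_left_mono mult_right_mono mult_pos_pos) auto
qed

lemma weighted_sum_ge_half_if_complement_subadditive:
  assumes "finite N" "f {} = 0" "\<And>I. I \<subseteq> N \<Longrightarrow> 0 \<le> f I"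
    and "\<And>I. I \<subseteq> N \<Longrightarrow> f N \<le> f I + f (N - I)"
  shows "f N / 2 \<le> (\<Sum>I\<in>Pow N. f I * potential_weight (card N) I)"
proof (cases "N = {}")
  case True
  then show ?thesis using assms(2) by simp
next
  case False
  define n where "n = card N"
  have "0 < n" using False assms(1) by (simp add: n_def card_gt_0_iff)
  have "f N / 2 \<le> real (Suc n) * f N / 2 / real n"
    using \<open>0 < n\<close> assms(3)[of N] by (simp add: field_simps)
  also have "\<dots> \<le> (\<Sum>I\<in>Pow N. f I / real (n choose card I)) / real n"
    using sum_Pow_div_binomial_ge[OF assms(1,4)] unfolding n_def
    by (intro divide_right_mono) linarith+
  also have "\<dots> = (\<Sum>I\<in>Pow N. f I * (1 / (real n * real (n choose card I))))"
    by (simp add: sum_divide_distrib mult.commute)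
  also have "\<dots> \<le> (\<Sum>I\<in>Pow N. f I * potential_weight n I)"
  proof (intro sum_mono)
    fix I assume "I \<in> Pow N"
    show "f I * (1 / (real n * real (n choose card I))) \<le> f I * potential_weight n I"
    proof (cases "I = {}")
      case False
      with \<open>I \<in> Pow N\<close> show ?thesis
        using assms(3) potential_weight_ge[OF assms(1)] unfolding n_def
        by (intro mult_left_mono) auto
    qed (simp add: assms(2))
  qed
  finally show ?thesis by (simp add: n_def)
qed

lemma XOS_supporting_additive:
  assumes "XOS M C" "T \<subseteq> M"
  obtains a where "C T = sum a T" "\<And>U. U \<subseteq> M \<Longrightarrow> sum a U \<le> C U"
proof -
  obtain A where A: "finite A" "A \<noteq> {}" "\<And>U. U \<subseteq> M \<Longrightarrow> C U = Max ((\<lambda>a. sum a U) ` A)"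
    using assms(1) unfolding XOS_def by blast
  have "Max ((\<lambda>a. sum a T) ` A) \<in> (\<lambda>a. sum a T) ` A"
    using A(1,2) by (intro Max_in) auto
  then obtain a where "a \<in> A" "C T = sum a T"
    using A(3)[OF assms(2)] by auto
  show thesis
  proof (rule that)
    show "C T = sum a T" by fact
    show "sum a U \<le> C U" if "U \<subseteq> M" for U
      using A \<open>a \<in> A\<close> that by simp
  qed
qed

lemma allocation_union_subset_ground:
  assumes "is_allocation n Mi S" "I \<subseteq> {1..n}"
  shows "(\<Union>i\<in>I. S i) \<subseteq> ground n Mi"
  using assms unfolding is_allocation_def ground_def by blast

lemma potential_ge_if_XOS:
  assumes fin: "\<forall>i\<in>{1..n}. finite (Mi i)"
    and disj: "\<forall>i\<in>{1..n}. \<forall>j\<in>{1..n}. i \<noteq> j \<longrightarrow> Mi i \<inter> Mi j = {}"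
    and "XOS (ground n Mi) C" "is_allocation n Mi S"
  shows "C (alloc_set n S) \<le> potential n C S"
proof -
  obtain a where a: "C (alloc_set n S) = sum a (alloc_set n S)"
    and a_le: "\<And>U. U \<subseteq> ground n Mi \<Longrightarrow> sum a U \<le> C U"
    using XOS_supporting_additive[OF assms(3) allocation_union_subset_ground[OF assms(4)]]
    unfolding alloc_set_def by blast
  have additive: "sum a (\<Union>i\<in>I. S i) = (\<Sum>i\<in>I. sum a (S i))" if "I \<subseteq> {1..n}" for I
  proof (rule sum.UNION_disjoint)
    show "finite I" using that finite_subset by blast
    show "\<forall>i\<in>I. finite (S i)"
      using that fin assms(4) unfolding is_allocation_def by (meson finite_subset subsetD)
    show "\<forall>i\<in>I. \<forall>j\<in>I. i \<noteq> j \<longrightarrow> S i \<inter> S j = {}"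
      using that disj assms(4) unfolding is_allocation_def by blast
  qed
  have "(\<Sum>i\<in>I. sum a (S i)) \<le> C (\<Union>i\<in>I. S i)" if "I \<subseteq> {1..n}" for I
    using additive[OF that] a_le[OF allocation_union_subset_ground[OF assms(4) that]] by simp
  then have "C (\<Union>i\<in>{1..n}. S i)
      \<le> (\<Sum>I\<in>Pow {1..n}. C (\<Union>i\<in>I. S i) * potential_weight (card {1..n}) I)"
    using a additive[of "{1..n}"] unfolding alloc_set_def
    by (intro weighted_sum_ge_if_additive_minorant[where x = "\<lambda>i. sum a (S i)"]) auto
  then show ?thesis by (simp add: potential_eq_weighted_sum alloc_set_def)
qed

lemma potential_ge_half_if_subadditive:
  assumes "nonneg_cost (ground n Mi) C" "normalized_cost C" "subadditive (ground n Mi) C"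
    and "is_allocation n Mi S"
  shows "C (alloc_set n S) / 2 \<le> potential n C S"
proof -
  have ground: "\<And>I. I \<subseteq> {1..n} \<Longrightarrow> (\<Union>i\<in>I. S i) \<subseteq> ground n Mi"
    using allocation_union_subset_ground[OF assms(4)] .
  have complement: "C (\<Union>i\<in>{1..n}. S i) \<le> C (\<Union>i\<in>I. S i) + C (\<Union>i\<in>{1..n} - I. S i)"
    if "I \<subseteq> {1..n}" for I
  proof -
    have "(\<Union>i\<in>{1..n}. S i) = (\<Union>i\<in>I. S i) \<union> (\<Union>i\<in>{1..n} - I. S i)"
      using that by blast
    then show ?thesis
      using assms(3) ground[OF that] ground[of "{1..n} - I"] unfolding subadditive_def
      by (metis Diff_subset)
  qed
  have "C (\<Union>i\<in>{1..n}. S i) / 2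
      \<le> (\<Sum>I\<in>Pow {1..n}. C (\<Union>i\<in>I. S i) * potential_weight (card {1..n}) I)"
    using assms(1,2) ground complement unfolding nonneg_cost_def normalized_cost_def
    by (intro weighted_sum_ge_half_if_complement_subadditive[where f = "\<lambda>I. C (\<Union>i\<in>I. S i)"])
      auto
  then show ?thesis by (simp add: potential_eq_weighted_sum alloc_set_def)
qed

theorem proposition3p3:
  fixes n :: nat and Mi :: "nat \<Rightarrow> 'a set" and C :: "'a set \<Rightarrow> real"
  assumes fin: "\<forall>i\<in>{1..n}. finite (Mi i)"
    and disj: "\<forall>i\<in>{1..n}. \<forall>j\<in>{1..n}. i \<noteq> j \<longrightarrow> Mi i \<inter> Mi j = {}"
    and nonneg: "nonneg_cost (ground n Mi) C"
    and mono: "monotone_cost (ground n Mi) C"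
    and norm: "normalized_cost C"
  shows "(XOS (ground n Mi) C \<longrightarrow>
            (\<forall>S. is_allocation n Mi S \<longrightarrow> potential n C S \<ge> C (alloc_set n S)))
       \<and> (subadditive (ground n Mi) C \<longrightarrow>
            (\<forall>S. is_allocation n Mi S \<longrightarrow> potential n C S \<ge> C (alloc_set n S) / 2))"
  using potential_ge_if_XOS[OF fin disj] potential_ge_half_if_subadditive[OF nonneg norm] by blast

end
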